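(* Let $A$ be an $(n-2)\times n$ integer matrix of rank $n-2$ with columns $a_1,\dots,a_n$ such that some $w\in\mathbb Q^{n-2}$ satisfies $w\cdot a_i=1$ for all $i$, and let $B=(b_{i\ell})$ be an $n\times2$ integer matrix whose columns form a $\mathbb Z$-basis of $\ker_{\mathbb Z}(A)$. Define the dual full discriminant $\tilde E_B(x_1,\dots,x_n)=\tilde{\mathcal C}_B(b_{i\ell}x_i,\ i=1,\dots,n,\ \ell=1,2)$, i.e. the dual Chow form evaluated at $y_{i\ell}=b_{i\ell}x_i$. Then $\tilde E_B$ has no monomial factors: no variable $x_i$ divides $\tilde E_B$.
   Context: $X_B\subset\mathbf P^{n-1}$ is the codimension-2 toric variety defined by the ideal $I_B\subset k[x_1,\dots,x_n]$ ($k$ of characteristic zero) generated by all binomials $x^{u_+}-x^{u_-}$ with $u=u_+-u_-\in\ker_{\mathbb Z}(A)$. With $Y=(y_{i\ell})$ an $n\times 2$ matrix of indeterminates, the dual Chow form $\tilde{\mathcal C}_B\in\mathbb Z[y_{i\ell}]$ is the irreducible polynomial (unique up to sign) vanishing exactly when the line $\{(y_{11}+ty_{12}:\cdots:y_{n1}+ty_{n2})\}$ meets $X_B$. *)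

theory Defs
  imports Complex_Main "HOL-Library.Poly_Mapping" "HOL-Computational_Algebra.Factorial_Ring"
begin

(* Multivariate polynomials with integer coefficients, in variables indexed by 'v,
  are elements of ('v \<Rightarrow>0 nat) \<Rightarrow>0 int (monomial \<mapsto> coefficient), with the
  convolution ring structure from HOL-Library.Poly_Mapping. *)

type_synonym 'v mpoly_int = "('v \<Rightarrow>\<^sub>0 nat) \<Rightarrow>\<^sub>0 int"

definition mpoly_var :: "'v \<Rightarrow> 'v mpoly_int" where
  "mpoly_var v = Poly_Mapping.single (Poly_Mapping.single v 1) 1"

definition mpoly_vars :: "'v mpoly_int \<Rightarrow> 'v set" where
  "mpoly_vars p = {v. \<exists>m\<in>Poly_Mapping.keys p. v \<in> Poly_Mapping.keys m}"

definition mpoly_eval :: "'v mpoly_int \<Rightarrow> ('v \<Rightarrow> complex) \<Rightarrow> complex" where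
  "mpoly_eval p f = (\<Sum>m\<in>Poly_Mapping.keys p. of_int (Poly_Mapping.lookup p m) * (\<Prod>v\<in>Poly_Mapping.keys m. f v ^ Poly_Mapping.lookup m v))"

(* Substitution y_{i l} := b_{i l} * x_i  (variables y indexed by (i,l), l\<in>{0,1}). *)
definition subst_B :: "(nat \<Rightarrow> nat \<Rightarrow> int) \<Rightarrow> (nat \<times> nat) mpoly_int \<Rightarrow> nat mpoly_int" where
  "subst_B B p = (\<Sum>m\<in>Poly_Mapping.keys p. Poly_Mapping.single 0 (Poly_Mapping.lookup p m) *
      (\<Prod>v\<in>Poly_Mapping.keys m. (Poly_Mapping.single (Poly_Mapping.single (fst v) 1) (B (fst v) (snd v)))
                         ^ Poly_Mapping.lookup m v))"

(* Matrices are functions nat \<Rightarrow> nat \<Rightarrow> int; A has rows r < n-2, columns j < n. *)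

definition full_row_rank :: "nat \<Rightarrow> nat \<Rightarrow> (nat \<Rightarrow> nat \<Rightarrow> int) \<Rightarrow> bool" where
  "full_row_rank m n A \<longleftrightarrow>
     (\<forall>c :: nat \<Rightarrow> rat. (\<forall>j<n. (\<Sum>r<m. c r * of_int (A r j)) = 0) \<longrightarrow> (\<forall>r<m. c r = 0))"

definition kerZ :: "nat \<Rightarrow> nat \<Rightarrow> (nat \<Rightarrow> nat \<Rightarrow> int) \<Rightarrow> (nat \<Rightarrow> int) set" where
  "kerZ m n A = {u. \<forall>r<m. (\<Sum>j<n. A r j * u j) = 0}"

definition is_Z_basis_of_ker :: "nat \<Rightarrow> nat \<Rightarrow> (nat \<Rightarrow> nat \<Rightarrow> int) \<Rightarrow> (nat \<Rightarrow> nat \<Rightarrow> int) \<Rightarrow> bool" where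
  "is_Z_basis_of_ker m n A B \<longleftrightarrow>
     (\<forall>l<2. (\<lambda>i. B i l) \<in> kerZ m n A) \<and>
     (\<forall>u \<in> kerZ m n A. \<exists>c1 c2 :: int. \<forall>i<n. u i = c1 * B i 0 + c2 * B i 1) \<and>
     (\<forall>c1 c2 :: int. (\<forall>i<n. c1 * B i 0 + c2 * B i 1 = 0) \<longrightarrow> c1 = 0 \<and> c2 = 0)"

(* The toric variety X_B, as a set of (nonzero) representatives z in C^n of points of P^{n-1}:
  common zeros of all binomials x^{u+} - x^{u-}, u \<in> ker_Z(A). *)
definition toric_XB :: "nat \<Rightarrow> nat \<Rightarrow> (nat \<Rightarrow> nat \<Rightarrow> int) \<Rightarrow> (nat \<Rightarrow> complex) set" where
  "toric_XB m n A = {z. (\<exists>i<n. z i \<noteq> 0) \<and>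
      (\<forall>u \<in> kerZ m n A. (\<Prod>i<n. z i ^ nat (max (u i) 0)) = (\<Prod>i<n. z i ^ nat (max (- u i) 0)))}"

(* y (an n x 2 complex matrix) has linearly independent columns, so it spans a line in P^{n-1}. *)
definition indep_cols :: "nat \<Rightarrow> (nat \<Rightarrow> nat \<Rightarrow> complex) \<Rightarrow> bool" where
  "indep_cols n y \<longleftrightarrow> (\<forall>s t. (\<forall>i<n. s * y i 0 + t * y i 1 = 0) \<longrightarrow> s = 0 \<and> t = 0)"

definition line_meets_XB :: "nat \<Rightarrow> nat \<Rightarrow> (nat \<Rightarrow> nat \<Rightarrow> int) \<Rightarrow> (nat \<Rightarrow> nat \<Rightarrow> complex) \<Rightarrow> bool" where
  "line_meets_XB m n A y \<longleftrightarrow>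
     (\<exists>s t. (s, t) \<noteq> (0, 0) \<and> (\<lambda>i. s * y i 0 + t * y i 1) \<in> toric_XB m n A)"

(* C is a (the, up to sign) dual Chow form of X_B: an irreducible integer polynomial in the
  variables y_{i l} (i<n, l<2) whose zero locus on lines (y with independent columns) is exactly
  the set of lines meeting X_B. *)
definition is_dual_chow_form :: "nat \<Rightarrow> nat \<Rightarrow> (nat \<Rightarrow> nat \<Rightarrow> int) \<Rightarrow> (nat \<times> nat) mpoly_int \<Rightarrow> bool" where
  "is_dual_chow_form m n A C \<longleftrightarrow>
     irreducible C \<and> mpoly_vars C \<subseteq> {..<n} \<times> {..<2} \<and>
     (\<forall>y. indep_cols n y \<longrightarrow>
        (mpoly_eval C (\<lambda>v. y (fst v) (snd v)) = 0 \<longleftrightarrow> line_meets_XB m n A y))"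

end

theory Submission
  imports Defs
begin

(* It suffices to find, for each i, a point x with x_i = 0 at which the substituted Chow form
  does not vanish, i.e. for which the columns of y = (b_jl x_j) span a genuine line missing X_B.
  Choose a nonzero row k of B, equal to i if row i is nonzero, and let x vanish exactly at i
  and k.  The points of that line are z_j = x_j v_j with v = s B_0 + t B_1.  The entries of
  every kernel vector sum to zero (this is what w gives), so v cannot vanish everywhere except
  at k, whence independence.  If v_k is nonzero, a kernel vector u with u_k > 0 supported
  inside the support of v gives a binomial that is zero on the x^(u+) side and nonzero on the
  x^(u-) side.  If v_k = 0, then v is proportional to the minor vector u_j = det(b_k, b_j), and
  the binomial of u fails at z once one coordinate of x is rescaled by 1 or 2. *)

section \<open>Evaluation of integer polynomials\<close>

definition monom_eval :: "('v \<Rightarrow>\<^sub>0 nat) \<Rightarrow> ('v \<Rightarrow> complex) \<Rightarrow> complex" where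
  "monom_eval m f = (\<Prod>v\<in>Poly_Mapping.keys m. f v ^ Poly_Mapping.lookup m v)"

lemma monom_eval_superset:
  "finite S \<Longrightarrow> Poly_Mapping.keys m \<subseteq> S \<Longrightarrow>
     monom_eval m f = (\<Prod>v\<in>S. f v ^ Poly_Mapping.lookup m v)"
  unfolding monom_eval_def by (rule prod.mono_neutral_left) (auto simp: in_keys_iff)

lemma monom_eval_add: "monom_eval (m1 + m2) f = monom_eval m1 f * monom_eval m2 f"
proof -
  let ?S = "Poly_Mapping.keys m1 \<union> Poly_Mapping.keys m2"
  have "monom_eval (m1 + m2) f = (\<Prod>v\<in>?S. f v ^ Poly_Mapping.lookup (m1 + m2) v)"
    by (rule monom_eval_superset) (auto simp: keys_add)
  also have "\<dots> = (\<Prod>v\<in>?S. f v ^ Poly_Mapping.lookup m1 v) * (\<Prod>v\<in>?S. f v ^ Poly_Mapping.lookup m2 v)"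
    by (simp add: lookup_add power_add prod.distrib)
  finally show ?thesis
    by (simp add: monom_eval_superset[of ?S m1] monom_eval_superset[of ?S m2])
qed

lemma mpoly_eval_eq_sum_monom_eval:
  "mpoly_eval p f = (\<Sum>m\<in>Poly_Mapping.keys p. of_int (Poly_Mapping.lookup p m) * monom_eval m f)"
  by (simp add: mpoly_eval_def monom_eval_def)

lemma mpoly_eval_0 [simp]: "mpoly_eval 0 f = 0"
  by (simp add: mpoly_eval_def)

lemma mpoly_eval_single [simp]: "mpoly_eval (Poly_Mapping.single m c) f = of_int c * monom_eval m f"
  by (simp add: mpoly_eval_eq_sum_monom_eval)

lemma mpoly_eval_1 [simp]: "mpoly_eval 1 f = 1"
  by (simp add: monom_eval_def flip: single_one)

lemma mpoly_eval_var [simp]: "mpoly_eval (mpoly_var v) f = f v"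
  by (simp add: mpoly_var_def monom_eval_def)

lemma mpoly_eval_add: "mpoly_eval (p + q) f = mpoly_eval p f + mpoly_eval q f"
  unfolding mpoly_eval_eq_sum_monom_eval
  by (rule setsum_keys_plus_distrib) (simp_all add: distrib_right)

lemma mpoly_eval_sum: "mpoly_eval (\<Sum>a\<in>A. g a) f = (\<Sum>a\<in>A. mpoly_eval (g a) f)"
  by (induction A rule: infinite_finite_induct) (auto simp: mpoly_eval_add)

lemma poly_mapping_eq_sum_single:
  "p = (\<Sum>m\<in>Poly_Mapping.keys p. Poly_Mapping.single m (Poly_Mapping.lookup p m))"
  by (rule poly_mapping_eqI) (simp add: lookup_sum lookup_single when_def in_keys_iff)

lemma mpoly_eval_mult: "mpoly_eval (p * q) f = mpoly_eval p f * mpoly_eval q f"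
proof -
  have "p * q = (\<Sum>a\<in>Poly_Mapping.keys p. Poly_Mapping.single a (Poly_Mapping.lookup p a)) *
      (\<Sum>b\<in>Poly_Mapping.keys q. Poly_Mapping.single b (Poly_Mapping.lookup q b))"
    by (simp flip: poly_mapping_eq_sum_single)
  also have "\<dots> = (\<Sum>a\<in>Poly_Mapping.keys p. \<Sum>b\<in>Poly_Mapping.keys q.
      Poly_Mapping.single (a + b) (Poly_Mapping.lookup p a * Poly_Mapping.lookup q b))"
    by (simp add: sum_distrib_left sum_distrib_right mult_single sum.swap[of _ "Poly_Mapping.keys q"])
  finally have "mpoly_eval (p * q) f = (\<Sum>a\<in>Poly_Mapping.keys p. \<Sum>b\<in>Poly_Mapping.keys q.
      of_int (Poly_Mapping.lookup p a) * of_int (Poly_Mapping.lookup q b) * (monom_eval a f * monom_eval b f))"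
    by (simp add: mpoly_eval_sum monom_eval_add)
  then show ?thesis
    unfolding mpoly_eval_eq_sum_monom_eval sum_product by (simp add: mult_ac)
qed

lemma mpoly_eval_prod: "mpoly_eval (\<Prod>a\<in>A. g a) f = (\<Prod>a\<in>A. mpoly_eval (g a) f)"
  by (induction A rule: infinite_finite_induct) (auto simp: mpoly_eval_mult)

lemma mpoly_eval_power: "mpoly_eval (p ^ k) f = mpoly_eval p f ^ k"
  by (induction k) (auto simp: mpoly_eval_mult)

lemma mpoly_eval_subst_B:
  "mpoly_eval (subst_B B p) x = mpoly_eval p (\<lambda>v. of_int (B (fst v) (snd v)) * x (fst v))"
  unfolding subst_B_def mpoly_eval_sum mpoly_eval_def[of p]
  by (simp add: mpoly_eval_mult mpoly_eval_prod mpoly_eval_power monom_eval_def mult_ac)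

lemma mpoly_eval_eq_0_if_var_dvd:
  assumes "mpoly_var v dvd p" and "f v = 0"
  shows "mpoly_eval p f = 0"
  using assms by (auto simp: mpoly_eval_mult)

section \<open>Toric binomials\<close>

definition binomial_vanishes :: "nat \<Rightarrow> (nat \<Rightarrow> int) \<Rightarrow> (nat \<Rightarrow> complex) \<Rightarrow> bool" where
  "binomial_vanishes n u z \<longleftrightarrow>
     (\<Prod>j<n. z j ^ nat (max (u j) 0)) = (\<Prod>j<n. z j ^ nat (max (- u j) 0))"

lemma binomial_vanishes_if_toric_XB:
  "z \<in> toric_XB m n A \<Longrightarrow> u \<in> kerZ m n A \<Longrightarrow> binomial_vanishes n u z"
  by (simp add: toric_XB_def binomial_vanishes_def)

lemma binomial_vanishes_cong:
  assumes "\<And>j. j < n \<Longrightarrow> u j \<noteq> 0 \<Longrightarrow> z j = z' j"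
  shows "binomial_vanishes n u z \<longleftrightarrow> binomial_vanishes n u z'"
proof -
  have "z j ^ nat (max (u j) 0) = z' j ^ nat (max (u j) 0)"
    and "z j ^ nat (max (- u j) 0) = z' j ^ nat (max (- u j) 0)" if "j < n" for j
    using assms[OF that] by (cases "u j = 0"; simp)+
  then show ?thesis
    unfolding binomial_vanishes_def by (metis (no_types, lifting) lessThan_iff prod.cong)
qed

lemma binomial_vanishes_scale:
  assumes "(\<Sum>j<n. u j) = 0" and "c \<noteq> 0"
  shows "binomial_vanishes n u (\<lambda>j. c * z j) \<longleftrightarrow> binomial_vanishes n u z"
proof -
  have "(\<Sum>j<n. nat (max (u j) 0)) = (\<Sum>j<n. nat (max (- u j) 0))"
  proof -
    have "(\<Sum>j<n. int (nat (max (u j) 0)) - int (nat (max (- u j) 0))) = (\<Sum>j<n. u j)"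
      by (rule sum.cong) auto
    then have "int (\<Sum>j<n. nat (max (u j) 0)) = int (\<Sum>j<n. nat (max (- u j) 0))"
      using assms(1) by (simp add: sum_subtractf)
    then show ?thesis by (simp only: of_nat_eq_iff)
  qed
  then show ?thesis
    using assms(2) by (simp add: binomial_vanishes_def power_mult_distrib prod.distrib flip: power_sum)
qed

lemma not_binomial_vanishes_if_zero_at_positive:
  assumes "k < n" "z k = 0" "u k > 0" and "\<And>j. j < n \<Longrightarrow> u j < 0 \<Longrightarrow> z j \<noteq> 0"
  shows "\<not> binomial_vanishes n u z"
proof -
  have "(\<Prod>j<n. z j ^ nat (max (u j) 0)) = 0"
    using assms(1-3) by (intro prod_zero bexI[of _ k]) auto
  moreover have "(\<Prod>j<n. z j ^ nat (max (- u j) 0)) \<noteq> 0"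
    using assms(4) by (auto simp: max_def)
  ultimately show ?thesis
    unfolding binomial_vanishes_def by argo
qed

lemma prod_scale_one_factor:
  fixes w :: "nat \<Rightarrow> 'a::comm_monoid_mult" and e :: "nat \<Rightarrow> nat"
  assumes "q < n"
  shows "(\<Prod>j<n. ((if j = q then a else 1) * w j) ^ e j) = a ^ e q * (\<Prod>j<n. w j ^ e j)"
proof -
  have "(\<Prod>j<n. (if j = q then a else 1) ^ e j) = (\<Prod>j<n. if j = q then a ^ e q else 1)"
    by (rule prod.cong) auto
  also have "\<dots> = a ^ e q"
    using assms by simp
  finally show ?thesis
    by (simp add: power_mult_distrib prod.distrib)
qed

lemma exists_rescaling_not_binomial_vanishes:
  assumes "q < n" "u q \<noteq> 0" and w: "\<And>j. j < n \<Longrightarrow> u j \<noteq> 0 \<Longrightarrow> w j \<noteq> 0"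
  shows "\<exists>a\<in>{1, 2}. \<not> binomial_vanishes n u (\<lambda>j. (if j = q then a else 1) * w j)"
proof (rule ccontr)
  define P where "P = (\<Prod>j<n. w j ^ nat (max (u j) 0))"
  define N where "N = (\<Prod>j<n. w j ^ nat (max (- u j) 0))"
  assume "\<not> ?thesis"
  then have "a ^ nat (max (u q) 0) * P = a ^ nat (max (- u q) 0) * N" if "a \<in> {1, 2}" for a
    using that by (auto simp: binomial_vanishes_def prod_scale_one_factor[OF \<open>q < n\<close>] P_def N_def)
  from this[of 1] this[of 2] have "(2::complex) ^ nat (max (u q) 0) * P = 2 ^ nat (max (- u q) 0) * P"
    by simp
  moreover have "P \<noteq> 0"
  proof -
    have "w j ^ nat (max (u j) 0) \<noteq> 0" if "j < n" for j
      using w[OF that] by (cases "u j = 0") auto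
    then show ?thesis
      unfolding P_def by (simp add: prod_zero_iff)
  qed
  ultimately have "of_nat (2 ^ nat (max (u q) 0)) = (of_nat (2 ^ nat (max (- u q) 0)) :: complex)"
    by simp
  then have "(2::nat) ^ nat (max (u q) 0) = 2 ^ nat (max (- u q) 0)"
    by (simp only: of_nat_eq_iff)
  then show False
    using \<open>u q \<noteq> 0\<close> by (simp add: max_def split: if_splits)
qed

section \<open>Pencils of kernel vectors\<close>

lemma kerZ_sum_eq_0:
  assumes w: "\<forall>i<n. (\<Sum>r<m. w r * of_int (A r i)) = (1::rat)" and u: "u \<in> kerZ m n A"
  shows "(\<Sum>j<n. u j) = 0"
proof -
  have "(of_int (\<Sum>j<n. u j) :: rat) = (\<Sum>j<n. (\<Sum>r<m. w r * of_int (A r j)) * of_int (u j))"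
    using w by simp
  also have "\<dots> = (\<Sum>r<m. w r * of_int (\<Sum>j<n. A r j * u j))"
    by (simp add: sum_distrib_left sum_distrib_right mult_ac sum.swap[of _ "{..<m}"])
  also have "\<dots> = 0"
    using u by (simp add: kerZ_def)
  finally show ?thesis
    by (simp only: of_int_eq_0_iff)
qed

lemma kerZ_lincomb:
  assumes "u \<in> kerZ m n A" and "u' \<in> kerZ m n A"
  shows "(\<lambda>j. c * u j + c' * u' j) \<in> kerZ m n A"
proof -
  have "(\<Sum>j<n. A r j * (c * u j + c' * u' j)) = c * (\<Sum>j<n. A r j * u j) + c' * (\<Sum>j<n. A r j * u' j)"
    for r
    by (simp add: algebra_simps sum.distrib sum_distrib_left)
  with assms show ?thesis
    by (simp add: kerZ_def)
qed

lemma exists_nonzero_minor: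
  fixes b0 b1 :: "nat \<Rightarrow> int"
  assumes "\<And>c0 c1. (\<forall>j<n. c0 * b0 j + c1 * b1 j = 0) \<Longrightarrow> c0 = 0 \<and> c1 = 0"
  shows "\<exists>p<n. \<exists>q<n. b0 p * b1 q - b1 p * b0 q \<noteq> 0"
proof (rule ccontr)
  assume minors: "\<not> ?thesis"
  obtain p where p: "p < n" "b0 p \<noteq> 0"
    using assms[of 1 0] by auto
  have "b1 p * b0 j + (- b0 p) * b1 j = 0" if "j < n" for j
    using minors p that by (auto simp: algebra_simps)
  then show False
    using assms[of "b1 p" "- b0 p"] p by auto
qed

lemma complex_independent_if_int_independent:
  fixes b0 b1 :: "nat \<Rightarrow> int" and s t :: complex
  assumes "\<And>c0 c1. (\<forall>j<n. c0 * b0 j + c1 * b1 j = 0) \<Longrightarrow> c0 = 0 \<and> c1 = 0"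
    and st: "\<forall>j<n. s * of_int (b0 j) + t * of_int (b1 j) = 0"
  shows "s = 0 \<and> t = 0"
proof -
  obtain p q where pq: "p < n" "q < n" and minor: "b0 p * b1 q - b1 p * b0 q \<noteq> 0"
    using exists_nonzero_minor[of n b0 b1] assms(1) by blast
  define D :: complex where "D = of_int (b0 p * b1 q - b1 p * b0 q)"
  have "D \<noteq> 0"
    unfolding D_def using minor by (simp only: of_int_eq_0_iff not_False_eq_True)
  have at_p: "s * of_int (b0 p) + t * of_int (b1 p) = 0"
    and at_q: "s * of_int (b0 q) + t * of_int (b1 q) = 0"
    using st pq by auto
  have "s * D = of_int (b1 q) * (s * of_int (b0 p) + t * of_int (b1 p))
      - of_int (b1 p) * (s * of_int (b0 q) + t * of_int (b1 q))"
    by (simp add: D_def algebra_simps)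
  then have "s * D = 0"
    by (simp only: at_p at_q) simp
  moreover have "t * D = of_int (b0 p) * (s * of_int (b0 q) + t * of_int (b1 q))
      - of_int (b0 q) * (s * of_int (b0 p) + t * of_int (b1 p))"
    by (simp add: D_def algebra_simps)
  then have "t * D = 0"
    by (simp only: at_p at_q) simp
  ultimately show ?thesis
    using \<open>D \<noteq> 0\<close> by simp
qed

lemma orthogonal_to_int_pair:
  fixes b0 b1 :: int and s t :: complex
  assumes "b0 \<noteq> 0 \<or> b1 \<noteq> 0" and "s * of_int b0 + t * of_int b1 = 0"
  shows "\<exists>c. s = c * of_int b1 \<and> t = - c * of_int b0"
proof (cases "b0 = 0")
  case True
  then show ?thesis
    using assms by (intro exI[of _ "s / of_int b1"]) auto
next
  case False
  then show ?thesis
    using assms(2) by (intro exI[of _ "- t / of_int b0"]) (auto simp: field_simps add_eq_0_iff)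
qed

locale homogeneous_kernel_pair =
  fixes m n :: nat and A B :: "nat \<Rightarrow> nat \<Rightarrow> int"
  assumes col_0_in_kerZ: "(\<lambda>j. B j 0) \<in> kerZ m n A"
    and col_1_in_kerZ: "(\<lambda>j. B j 1) \<in> kerZ m n A"
    and cols_independent: "\<And>c0 c1. (\<forall>j<n. c0 * B j 0 + c1 * B j 1 = 0) \<Longrightarrow> c0 = 0 \<and> c1 = 0"
    and kerZ_sum_zero: "\<And>u. u \<in> kerZ m n A \<Longrightarrow> (\<Sum>j<n. u j) = 0"
begin

definition nonzero_row :: "nat \<Rightarrow> bool" where
  "nonzero_row j \<longleftrightarrow> B j 0 \<noteq> 0 \<or> B j 1 \<noteq> 0"

definition pencil :: "complex \<Rightarrow> complex \<Rightarrow> nat \<Rightarrow> complex" where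
  "pencil s t j = s * of_int (B j 0) + t * of_int (B j 1)"

definition row_minor :: "nat \<Rightarrow> nat \<Rightarrow> int" where
  "row_minor k j = B k 1 * B j 0 - B k 0 * B j 1"

definition row_scaled :: "(nat \<Rightarrow> complex) \<Rightarrow> nat \<Rightarrow> nat \<Rightarrow> complex" where
  "row_scaled x j l = of_int (B j l) * x j"

lemma cols_lincomb_in_kerZ: "(\<lambda>j. c0 * B j 0 + c1 * B j 1) \<in> kerZ m n A"
  using kerZ_lincomb[OF col_0_in_kerZ col_1_in_kerZ] .

lemma pencil_zero_row: "\<not> nonzero_row j \<Longrightarrow> pencil s t j = 0"
  by (simp add: nonzero_row_def pencil_def)

lemma pencil_sum_eq_0: "(\<Sum>j<n. pencil s t j) = 0"
proof -
  have "(\<Sum>j<n. B j l) = 0" if "l = 0 \<or> l = 1" for l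
    using kerZ_sum_zero[OF col_0_in_kerZ] kerZ_sum_zero[OF col_1_in_kerZ] that by auto
  then have "(\<Sum>j<n. of_int (B j l) :: complex) = 0" if "l = 0 \<or> l = 1" for l
    using that by (metis of_int_0 of_int_sum)
  then show ?thesis
    by (simp add: pencil_def sum.distrib flip: sum_distrib_left)
qed

lemma pencil_vanishing_imp_zero: "\<forall>j<n. pencil s t j = 0 \<Longrightarrow> s = 0 \<and> t = 0"
  unfolding pencil_def by (rule complex_independent_if_int_independent[OF cols_independent])

lemma exists_nonzero_row: "\<exists>k<n. nonzero_row k"
  using cols_independent[of 1 0] by (auto simp: nonzero_row_def)

lemma row_minor_in_kerZ: "row_minor k \<in> kerZ m n A"
  using cols_lincomb_in_kerZ[of "B k 1" "- B k 0"] by (simp add: row_minor_def[abs_def])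

lemma row_minor_self: "row_minor k k = 0"
  by (simp add: row_minor_def)

lemma row_minor_zero_row: "\<not> nonzero_row j \<Longrightarrow> row_minor k j = 0"
  by (simp add: row_minor_def nonzero_row_def)

lemma exists_row_minor_nonzero:
  assumes "nonzero_row k"
  shows "\<exists>q<n. row_minor k q \<noteq> 0"
  using cols_independent[of "B k 1" "- B k 0"] assms by (auto simp: row_minor_def nonzero_row_def)

lemma pencil_eq_row_minor:
  assumes "nonzero_row k" and "pencil s t k = 0"
  obtains c where "\<And>j. pencil s t j = c * of_int (row_minor k j)"
proof -
  obtain c where "s = c * of_int (B k 1)" "t = - c * of_int (B k 0)"
    using orthogonal_to_int_pair[of "B k 0" "B k 1" s t] assms by (auto simp: nonzero_row_def pencil_def)
  then show ?thesis
    by (intro that[of c]) (simp add: pencil_def row_minor_def algebra_simps)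
qed

lemma exists_cols_lincomb_supported_in_pencil:
  assumes "pencil s t k \<noteq> 0"
  obtains c0 c1 where "c0 * B k 0 + c1 * B k 1 \<noteq> 0"
    and "\<forall>j<n. c0 * B j 0 + c1 * B j 1 \<noteq> 0 \<longrightarrow> pencil s t j \<noteq> 0"
proof (cases "\<forall>j<n. nonzero_row j \<longrightarrow> pencil s t j \<noteq> 0")
  case True
  then have supp_all: "\<forall>j<n. c0 * B j 0 + c1 * B j 1 \<noteq> 0 \<longrightarrow> pencil s t j \<noteq> 0" for c0 c1
    by (auto simp: nonzero_row_def)
  have "nonzero_row k"
    using assms pencil_zero_row by blast
  then show ?thesis
  proof (cases "B k 0 = 0")
    case True
    then show ?thesis
      using \<open>nonzero_row k\<close> by (intro that[of 0 1] supp_all) (simp_all add: nonzero_row_def)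
  next
    case False
    then show ?thesis
      by (intro that[of 1 0] supp_all) simp
  qed
next
  case False
  then obtain p where p: "nonzero_row p" "pencil s t p = 0"
    by auto
  obtain c where c: "\<And>j. pencil s t j = c * of_int (row_minor p j)"
    using pencil_eq_row_minor[OF p] by blast
  have minor_eq: "B p 1 * B j 0 + - B p 0 * B j 1 = row_minor p j" for j
    by (simp add: row_minor_def)
  show ?thesis
  proof (rule that[of "B p 1" "- B p 0", unfolded minor_eq])
    show "row_minor p k \<noteq> 0"
      using assms c[of k] by auto
    show "\<forall>j<n. row_minor p j \<noteq> 0 \<longrightarrow> pencil s t j \<noteq> 0"
      using assms c[of k] by (auto simp: c)
  qed
qed

lemma exists_kerZ_supported_in_pencil:
  assumes "pencil s t k \<noteq> 0"
  shows "\<exists>u\<in>kerZ m n A. u k > 0 \<and> (\<forall>j<n. u j \<noteq> 0 \<longrightarrow> pencil s t j \<noteq> 0)"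
proof -
  obtain c0 c1 where ck: "c0 * B k 0 + c1 * B k 1 \<noteq> 0"
    and supp: "\<forall>j<n. c0 * B j 0 + c1 * B j 1 \<noteq> 0 \<longrightarrow> pencil s t j \<noteq> 0"
    using exists_cols_lincomb_supported_in_pencil[OF assms] by blast
  define e :: int where "e = sgn (c0 * B k 0 + c1 * B k 1)"
  define u where "u j = (e * c0) * B j 0 + (e * c1) * B j 1" for j
  have "u \<in> kerZ m n A"
    unfolding u_def by (rule cols_lincomb_in_kerZ)
  moreover have "u k = \<bar>c0 * B k 0 + c1 * B k 1\<bar>"
    by (simp add: u_def e_def abs_sgn algebra_simps)
  then have "u k > 0"
    using ck by simp
  moreover have "\<forall>j<n. u j \<noteq> 0 \<longrightarrow> pencil s t j \<noteq> 0"
    using supp by (simp add: u_def mult.assoc flip: distrib_left)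
  ultimately show ?thesis
    by blast
qed

lemma row_scaled_line_point: "s * row_scaled x j 0 + t * row_scaled x j 1 = x j * pencil s t j"
  by (simp add: row_scaled_def pencil_def algebra_simps)

lemma indep_cols_row_scaled:
  assumes "k < n" and x: "\<And>j. j < n \<Longrightarrow> j \<noteq> k \<Longrightarrow> nonzero_row j \<Longrightarrow> x j \<noteq> 0"
  shows "indep_cols n (row_scaled x)"
  unfolding indep_cols_def row_scaled_line_point
proof (intro allI impI)
  fix s t
  assume "\<forall>j<n. x j * pencil s t j = 0"
  then have off_k: "pencil s t j = 0" if "j < n" "j \<noteq> k" for j
    using x[OF that] pencil_zero_row that by auto
  have "pencil s t k = (\<Sum>j<n. pencil s t j)"
    using \<open>k < n\<close> off_k by (simp add: sum.remove[of _ k] sum.neutral)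
  then have "\<forall>j<n. pencil s t j = 0"
    using off_k pencil_sum_eq_0 by metis
  then show "s = 0 \<and> t = 0"
    by (rule pencil_vanishing_imp_zero)
qed

lemma line_point_notin_toric_XB_if_pencil_nonzero:
  assumes "k < n" "x k = 0" and x: "\<And>j. j < n \<Longrightarrow> j \<noteq> k \<Longrightarrow> nonzero_row j \<Longrightarrow> x j \<noteq> 0"
    and "pencil s t k \<noteq> 0"
  shows "(\<lambda>j. x j * pencil s t j) \<notin> toric_XB m n A"
proof
  obtain u where u: "u \<in> kerZ m n A" "u k > 0" "\<forall>j<n. u j \<noteq> 0 \<longrightarrow> pencil s t j \<noteq> 0"
    using exists_kerZ_supported_in_pencil[OF assms(4)] by blast
  have "\<not> binomial_vanishes n u (\<lambda>j. x j * pencil s t j)"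
  proof (rule not_binomial_vanishes_if_zero_at_positive[where k = k])
    fix j
    assume "j < n" "u j < 0"
    moreover from this have "j \<noteq> k" "pencil s t j \<noteq> 0"
      using u by auto
    ultimately show "x j * pencil s t j \<noteq> 0"
      using x pencil_zero_row by auto
  qed (use \<open>k < n\<close> \<open>x k = 0\<close> u in auto)
  moreover assume "(\<lambda>j. x j * pencil s t j) \<in> toric_XB m n A"
  ultimately show False
    using binomial_vanishes_if_toric_XB u(1) by blast
qed

lemma line_point_notin_toric_XB_if_pencil_zero:
  assumes "nonzero_row k" "pencil s t k = 0" "(s, t) \<noteq> (0, 0)"
    and "\<not> binomial_vanishes n (row_minor k) (\<lambda>j. x j * of_int (row_minor k j))"
  shows "(\<lambda>j. x j * pencil s t j) \<notin> toric_XB m n A"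
proof
  obtain c where c: "\<And>j. pencil s t j = c * of_int (row_minor k j)"
    using pencil_eq_row_minor[OF assms(1,2)] by blast
  have "c \<noteq> 0"
  proof
    assume "c = 0"
    then have "\<forall>j<n. pencil s t j = 0"
      by (simp add: c)
    with assms(3) show False
      using pencil_vanishing_imp_zero by blast
  qed
  have point_eq: "(\<lambda>j. x j * pencil s t j) = (\<lambda>j. c * (x j * of_int (row_minor k j)))"
    by (simp add: c mult.left_commute)
  assume "(\<lambda>j. x j * pencil s t j) \<in> toric_XB m n A"
  then have "binomial_vanishes n (row_minor k) (\<lambda>j. c * (x j * of_int (row_minor k j)))"
    unfolding point_eq by (rule binomial_vanishes_if_toric_XB[OF _ row_minor_in_kerZ])
  then show False
    using assms(4) binomial_vanishes_scale[OF kerZ_sum_zero[OF row_minor_in_kerZ] \<open>c \<noteq> 0\<close>] by blast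
qed

lemma not_line_meets_XB_row_scaled:
  assumes "k < n" "nonzero_row k" "x k = 0"
    and "\<And>j. j < n \<Longrightarrow> j \<noteq> k \<Longrightarrow> nonzero_row j \<Longrightarrow> x j \<noteq> 0"
    and "\<not> binomial_vanishes n (row_minor k) (\<lambda>j. x j * of_int (row_minor k j))"
  shows "\<not> line_meets_XB m n A (row_scaled x)"
  unfolding line_meets_XB_def row_scaled_line_point
  using line_point_notin_toric_XB_if_pencil_nonzero[where x = x, OF assms(1,3,4)]
    line_point_notin_toric_XB_if_pencil_zero[where x = x, OF assms(2) _ _ assms(5)]
  by blast

lemma exists_row_scaling_avoiding_XB:
  assumes "i < n"
  shows "\<exists>x. x i = 0 \<and> indep_cols n (row_scaled x) \<and> \<not> line_meets_XB m n A (row_scaled x)"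
proof -
  obtain k where k: "k < n" "nonzero_row k" "nonzero_row i \<longrightarrow> k = i"
    using exists_nonzero_row assms by blast
  obtain q where q: "q < n" "row_minor k q \<noteq> 0"
    using exists_row_minor_nonzero[OF k(2)] by blast
  have "\<exists>a\<in>{1, 2}. \<not> binomial_vanishes n (row_minor k)
      (\<lambda>j. (if j = q then a else 1) * of_int (row_minor k j))"
    by (rule exists_rescaling_not_binomial_vanishes) (use q in auto)
  then obtain a :: complex where a: "a \<in> {1, 2}"
    and not_vanish: "\<not> binomial_vanishes n (row_minor k) (\<lambda>j. (if j = q then a else 1) * of_int (row_minor k j))"
    by blast
  define x where "x j = (if j = i \<or> j = k then 0 else if j = q then a else 1)" for j
  have x_nonzero: "x j \<noteq> 0" if "j \<noteq> k" "nonzero_row j" for j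
    using that k(3) a by (auto simp: x_def)
  have "binomial_vanishes n (row_minor k) (\<lambda>j. x j * of_int (row_minor k j)) \<longleftrightarrow>
      binomial_vanishes n (row_minor k) (\<lambda>j. (if j = q then a else 1) * of_int (row_minor k j))"
    by (rule binomial_vanishes_cong)
      (use k(3) row_minor_self row_minor_zero_row in \<open>auto simp: x_def\<close>)
  with not_vanish have not_vanish_x: "\<not> binomial_vanishes n (row_minor k) (\<lambda>j. x j * of_int (row_minor k j))"
    by blast
  have "x i = 0" "x k = 0"
    by (simp_all add: x_def)
  moreover have "indep_cols n (row_scaled x)"
    by (rule indep_cols_row_scaled[OF k(1)]) (simp add: x_nonzero)
  moreover have "\<not> line_meets_XB m n A (row_scaled x)"
    by (rule not_line_meets_XB_row_scaled[OF k(1,2) \<open>x k = 0\<close> _ not_vanish_x]) (simp add: x_nonzero)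
  ultimately show ?thesis
    by blast
qed

end

lemma homogeneous_kernel_pair_if_Z_basis:
  assumes w: "\<forall>i<n. (\<Sum>r<m. w r * of_int (A r i)) = (1::rat)" and "is_Z_basis_of_ker m n A B"
  shows "homogeneous_kernel_pair m n A B"
proof unfold_locales
  have cols: "\<forall>l<2. (\<lambda>j. B j l) \<in> kerZ m n A"
    and indep: "\<forall>c0 c1. (\<forall>j<n. c0 * B j 0 + c1 * B j 1 = 0) \<longrightarrow> c0 = 0 \<and> c1 = 0"
    using assms(2) unfolding is_Z_basis_of_ker_def by blast+
  show "(\<lambda>j. B j 0) \<in> kerZ m n A" "(\<lambda>j. B j 1) \<in> kerZ m n A"
    using cols by simp_all
  show "c0 = 0 \<and> c1 = 0" if "\<forall>j<n. c0 * B j 0 + c1 * B j 1 = 0" for c0 c1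
    using indep that by blast
  show "(\<Sum>j<n. u j) = 0" if "u \<in> kerZ m n A" for u
    using kerZ_sum_eq_0[OF w that] .
qed

theorem lemma3p3:
  fixes n :: nat and A :: "nat \<Rightarrow> nat \<Rightarrow> int" and B :: "nat \<Rightarrow> nat \<Rightarrow> int"
    and C :: "(nat \<times> nat) mpoly_int"
  assumes "n \<ge> 2"
    and "full_row_rank (n - 2) n A"
    and "\<exists>w :: nat \<Rightarrow> rat. \<forall>i<n. (\<Sum>r<n - 2. w r * of_int (A r i)) = 1"
    and "is_Z_basis_of_ker (n - 2) n A B"
    and "is_dual_chow_form (n - 2) n A C"
  shows "\<forall>i<n. \<not> mpoly_var i dvd subst_B B C"
proof (intro allI impI notI)
  fix i
  assume "i < n" and dvd: "mpoly_var i dvd subst_B B C"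
  obtain w where "\<forall>i<n. (\<Sum>r<n - 2. w r * of_int (A r i)) = (1::rat)"
    using assms(3) by blast
  then interpret homogeneous_kernel_pair "n - 2" n A B
    using assms(4) by (rule homogeneous_kernel_pair_if_Z_basis)
  obtain x where "x i = 0" and line: "indep_cols n (row_scaled x)" "\<not> line_meets_XB (n - 2) n A (row_scaled x)"
    using exists_row_scaling_avoiding_XB[OF \<open>i < n\<close>] by blast
  have "mpoly_eval (subst_B B C) x = mpoly_eval C (\<lambda>v. row_scaled x (fst v) (snd v))"
    by (simp add: mpoly_eval_subst_B row_scaled_def)
  also have "\<dots> \<noteq> 0"
    using assms(5) line unfolding is_dual_chow_form_def by blast
  finally show False
    using mpoly_eval_eq_0_if_var_dvd[OF dvd, of x] \<open>x i = 0\<close> by blast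
qed

end
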